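(* Let $X$, $\Sigma$, $A$, $\#$, $X^\#$ and $A'$ be as follows: $X$ and $\Sigma$ are finite alphabets; $A$ is a finite automaton with state set $Q$, start state, final states, and edges labelled by pairs $(y, a)$ with $y \in \{\epsilon\} \cup X \cup \{x^{-1} : x \in X\}$ and $a \in \Sigma \cup \{\epsilon\}$; $\#$ is a new symbol not in $X$ and $X^\# = X \cup \{\#\}$; $A'$ has state set $Q_+ \cup Q_-$ (two disjoint copies $q_+, q_-$ of each $q \in Q$), start state $q_+$ for $q$ the start state of $A$, final states $q_-$ for $q$ final in $A$, an edge $p_+ \to q_+$ labelled $(x\#, a)$ whenever $A$ has an edge $p \to q$ labelled $(x,a)$ with $x \in X$, an edge $p_- \to q_+$ labelled $(x^{-1}\#, a)$ whenever $A$ has an edge $p \to q$ labelled $(x^{-1},a)$ with $x \in X$, an edge $p_+ \to q_+$ labelled $(\epsilon,a)$ whenever $A$ has an edge $p \to q$ labelled $(\epsilon, a)$, an edge $q_+ \to q_-$ labelled $(\epsilon,\epsilon)$ for each $q \in Q$, and a loop at $q_-$ labelled $(\#^{-1},\epsilon)$ for each $q \in Q$. Regard $A$ and $A'$ as ordinary finite automata over the free monoids $\overline{X}^* \times \Sigma^*$ and $(\overline{X^\#})^* \times \Sigma^*$ respectively. Then for $x \in (\overline{X^\#})^*$ and $w \in \Sigma^*$, the automaton $A'$ accepts $(x, w)$ if and only if there exists a word $y \in \overline{X}^*$ such that $x$ is a permissible padding of $y$ and $(y, w)$ is accepted by $A$.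
   Context: For an alphabet $Y$, $\overline{Y} = \{y, y^{-1} : y \in Y\}$, treated as an alphabet of formal symbols; letters of $Y$ are positive generators and letters $y^{-1}$ negative generators. A finite automaton over a monoid $N$ (edges labelled by elements of $N$) accepts an element $n \in N$ if some path from the start state to a final state has label (product of edge labels) $n$. Permissible padding: for $w = w_1 \cdots w_n$ with $w_i \in \overline{X}$, a permissible padding of $w$ is a word $x_1 x_2 \cdots x_n (\#^{-1})^k$ with $k \geq 0$, where $x_i = (\#^{-1})^{m_i} w_i \#$ for some $m_i \geq 0$ if $w_i$ is a negative generator, and $x_i = w_i \#$ if $w_i$ is a positive generator. *)

theory Defs
  imports Main
begin

datatype 'a gen = Pos 'a | Neg 'a

fun base :: "'a gen \<Rightarrow> 'a" where
  "base (Pos a) = a" | "base (Neg a) = a"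

datatype 'x hsym = Sym 'x | Hash

fun opt2list :: "'a option \<Rightarrow> 'a list" where
  "opt2list None = []" | "opt2list (Some a) = [a]"

inductive path :: "('q \<times> ('s list \<times> 'c list) \<times> 'q) set \<Rightarrow> 'q \<Rightarrow> 's list \<times> 'c list \<Rightarrow> 'q \<Rightarrow> bool"
  for E where
  path_nil: "path E p ([], []) p"
| path_step: "(p, (u1, w1), r) \<in> E \<Longrightarrow> path E r (u2, w2) q \<Longrightarrow> path E p (u1 @ u2, w1 @ w2) q"

definition accepts :: "('q \<times> ('s list \<times> 'c list) \<times> 'q) set \<Rightarrow> 'q \<Rightarrow> 'q set \<Rightarrow> 's list \<times> 'c list \<Rightarrow> bool" where
  "accepts E s F uw \<longleftrightarrow> (\<exists>f\<in>F. path E s uw f)"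

text \<open>The automaton A has edges labelled (y, a) with y in {eps} + overline(X) (None = eps)
  and a in Sigma + {eps} (None = eps). Viewed as an automaton over overline(X)^* x Sigma^*:\<close>
definition monoid_edges :: "('q \<times> ('x gen option \<times> 'c option) \<times> 'q) set \<Rightarrow> ('q \<times> ('x gen list \<times> 'c list) \<times> 'q) set" where
  "monoid_edges E = {(p, (opt2list y, opt2list a), q) | p y a q. (p, (y, a), q) \<in> E}"

text \<open>The automaton A'. States are pairs (q, True) = q_+ and (q, False) = q_-.\<close>
definition A'_edges :: "'q set \<Rightarrow> ('q \<times> ('x gen option \<times> 'c option) \<times> 'q) set
    \<Rightarrow> (('q \<times> bool) \<times> ('x hsym gen list \<times> 'c list) \<times> ('q \<times> bool)) set" where
  "A'_edges Q E =
     {((p, True), ([Pos (Sym x), Pos Hash], opt2list a), (q, True)) | p x a q. (p, (Some (Pos x), a), q) \<in> E}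
   \<union> {((p, False), ([Neg (Sym x), Pos Hash], opt2list a), (q, True)) | p x a q. (p, (Some (Neg x), a), q) \<in> E}
   \<union> {((p, True), ([], opt2list a), (q, True)) | p a q. (p, (None, a), q) \<in> E}
   \<union> {((q, True), ([], []), (q, False)) | q. q \<in> Q}
   \<union> {((q, False), ([Neg Hash], []), (q, False)) | q. q \<in> Q}"

definition A'_start :: "'q \<Rightarrow> 'q \<times> bool" where
  "A'_start q0 = (q0, True)"

definition A'_finals :: "'q set \<Rightarrow> ('q \<times> bool) set" where
  "A'_finals F = {(q, False) | q. q \<in> F}"

fun pad_letter :: "nat \<Rightarrow> 'x gen \<Rightarrow> 'x hsym gen list" where
  "pad_letter m (Pos x) = [Pos (Sym x), Pos Hash]"
| "pad_letter m (Neg x) = replicate m (Neg Hash) @ [Neg (Sym x), Pos Hash]"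

definition permissible_padding :: "'x hsym gen list \<Rightarrow> 'x gen list \<Rightarrow> bool" where
  "permissible_padding z w \<longleftrightarrow>
     (\<exists>ms k. length ms = length w \<and> z = concat (map2 pad_letter ms w) @ replicate k (Neg Hash))"

end

theory Submission
  imports Defs
begin

text \<open>Each edge of A is simulated in A' by a path between the positive copies of its
  endpoints; a negative generator is read from the negative copy of its source, where
  the loops may first consume any number of \<open>#\<^sup>-\<^sup>1\<close>.  Conversely, cutting an accepting
  path of A' at its visits to positive states recovers a path of A.  The invariant for
  this direction is that a path of A' from a negative state reads the padding of a word
  of A that is empty or starts with a negative generator, since only such a padding can
  absorb a further leading \<open>#\<^sup>-\<^sup>1\<close>.\<close>

lemma path_single: "(p, uw, q) \<in> E \<Longrightarrow> path E p uw q"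
  using path_step[OF _ path_nil, of p "fst uw" "snd uw" q E] by simp

lemma path_append:
  "path E p uw r \<Longrightarrow> path E r uw' q \<Longrightarrow> path E p (fst uw @ fst uw', snd uw @ snd uw') q"
proof (induction rule: path.induct)
  case (path_nil p)
  then show ?case by simp
next
  case (path_step p u1 w1 r u2 w2 q)
  then show ?case using path.path_step[of p u1 w1 r E] by fastforce
qed

lemma monoid_edgesI: "(p, (y, a), q) \<in> E \<Longrightarrow> (p, (opt2list y, opt2list a), q) \<in> monoid_edges E"
  unfolding monoid_edges_def by blast

lemma monoid_edgesE:
  assumes "(p, (u, v), q) \<in> monoid_edges E"
  obtains y a where "(p, (y, a), q) \<in> E" "u = opt2list y" "v = opt2list a"
  using assms unfolding monoid_edges_def by blast

lemma path_monoid_edges_step: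
  "(p, (y0, a), r) \<in> E \<Longrightarrow> path (monoid_edges E) r (y, w) q \<Longrightarrow>
   path (monoid_edges E) p (opt2list y0 @ y, opt2list a @ w) q"
  by (rule path_step[OF monoid_edgesI])

lemma path_monoid_edges_letters:
  assumes "\<forall>(p, (y, a), q) \<in> E. \<forall>g. y = Some g \<longrightarrow> base g \<in> X"
  shows "path (monoid_edges E) p uw q \<Longrightarrow> \<forall>g \<in> set (fst uw). base g \<in> X"
proof (induction rule: path.induct)
  case (path_nil p)
  then show ?case by simp
next
  case (path_step p u1 w1 r u2 w2 q)
  then obtain y a where "(p, (y, a), r) \<in> E" "u1 = opt2list y"
    by (auto elim: monoid_edgesE)
  with assms path_step.IH show ?case by (cases y) auto
qed

lemma A'_edge_Pos:
  "(p, (Some (Pos x), a), q) \<in> E \<Longrightarrow>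
   ((p, True), ([Pos (Sym x), Pos Hash], opt2list a), (q, True)) \<in> A'_edges Q E"
  unfolding A'_edges_def by blast

lemma A'_edge_Neg:
  "(p, (Some (Neg x), a), q) \<in> E \<Longrightarrow>
   ((p, False), ([Neg (Sym x), Pos Hash], opt2list a), (q, True)) \<in> A'_edges Q E"
  unfolding A'_edges_def by blast

lemma A'_edge_eps: "(p, (None, a), q) \<in> E \<Longrightarrow> ((p, True), ([], opt2list a), (q, True)) \<in> A'_edges Q E"
  unfolding A'_edges_def by blast

lemma A'_edge_switch: "q \<in> Q \<Longrightarrow> ((q, True), ([], []), (q, False)) \<in> A'_edges Q E"
  unfolding A'_edges_def by blast

lemma A'_edge_loop: "q \<in> Q \<Longrightarrow> ((q, False), ([Neg Hash], []), (q, False)) \<in> A'_edges Q E"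
  unfolding A'_edges_def by blast

lemma A'_edgesE:
  assumes "(s, (u, v), t) \<in> A'_edges Q E"
  obtains
    (Pos) p x a q where "s = (p, True)" "u = [Pos (Sym x), Pos Hash]" "v = opt2list a"
      "t = (q, True)" "(p, (Some (Pos x), a), q) \<in> E"
  | (Neg) p x a q where "s = (p, False)" "u = [Neg (Sym x), Pos Hash]" "v = opt2list a"
      "t = (q, True)" "(p, (Some (Neg x), a), q) \<in> E"
  | (eps) p a q where "s = (p, True)" "u = []" "v = opt2list a" "t = (q, True)"
      "(p, (None, a), q) \<in> E"
  | (switch) q where "s = (q, True)" "u = []" "v = []" "t = (q, False)"
  | (loop) q where "s = (q, False)" "u = [Neg Hash]" "v = []" "t = (q, False)"
  using assms unfolding A'_edges_def by blast

lemma path_A'_loops: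
  assumes "q \<in> Q"
  shows "path (A'_edges Q E) (q, False) (replicate m (Neg Hash), []) (q, False)"
proof (induction m)
  case 0
  then show ?case by (simp add: path_nil)
next
  case (Suc m)
  from path_step[OF A'_edge_loop[OF assms] Suc] show ?case by simp
qed

definition pad_word :: "nat list \<Rightarrow> nat \<Rightarrow> 'x gen list \<Rightarrow> 'x hsym gen list" where
  "pad_word ms k y = concat (map2 pad_letter ms y) @ replicate k (Neg Hash)"

lemma permissible_padding_iff_pad_word:
  "permissible_padding z y \<longleftrightarrow> (\<exists>ms k. length ms = length y \<and> z = pad_word ms k y)"
  unfolding permissible_padding_def pad_word_def by blast

lemma pad_word_Nil [simp]: "pad_word [] k [] = replicate k (Neg Hash)"
  by (simp add: pad_word_def)

lemma pad_word_Cons [simp]: "pad_word (m # ms) k (g # y) = pad_letter m g @ pad_word ms k y"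
  by (simp add: pad_word_def)

definition starts_negative :: "'x gen list \<Rightarrow> bool" where
  "starts_negative y \<longleftrightarrow> (\<forall>x y'. y \<noteq> Pos x # y')"

lemma Neg_Hash_Cons_pad_word:
  assumes "starts_negative y" "length ms = length y"
  obtains ms' k' where "length ms' = length y" "Neg Hash # pad_word ms k y = pad_word ms' k' y"
proof (cases y)
  case Nil
  with assms(2) show ?thesis by (intro that[of "[]" "Suc k"]) auto
next
  case (Cons g y')
  with assms obtain x m ms'' where "g = Neg x" "ms = m # ms''"
    by (cases g; cases ms) (auto simp: starts_negative_def)
  with Cons assms(2) show ?thesis by (intro that[of "Suc m # ms''" k]) auto
qed

lemma path_A'_pad_letter:
  assumes "(p, (Some g, a), q) \<in> E" "p \<in> Q"
  shows "path (A'_edges Q E) (p, True) (pad_letter m g, opt2list a) (q, True)"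
proof (cases g)
  case (Pos x)
  with assms(1) show ?thesis by (simp add: path_single A'_edge_Pos)
next
  case (Neg x)
  have "path (A'_edges Q E) (p, False) ([Neg (Sym x), Pos Hash], opt2list a) (q, True)"
    using assms(1) Neg by (simp add: path_single A'_edge_Neg)
  with path_A'_loops[OF assms(2)]
  have "path (A'_edges Q E) (p, False) (pad_letter m g, opt2list a) (q, True)"
    using path_append Neg by fastforce
  with path_step[OF A'_edge_switch[OF assms(2)]] show ?thesis by fastforce
qed

lemma path_A'_of_path_monoid_edges:
  assumes "\<forall>(p, l, q) \<in> E. p \<in> Q"
  shows "path (monoid_edges E) p (y, w) q \<Longrightarrow> length ms = length y \<Longrightarrow>
    path (A'_edges Q E) (p, True) (concat (map2 pad_letter ms y), w) (q, True)"
proof (induction p "(y, w)" q arbitrary: y w ms rule: path.induct)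
  case (path_nil p)
  then show ?case by (simp add: path.path_nil)
next
  case (path_step p u1 w1 r u2 w2 q)
  obtain y0 a where edge: "(p, (y0, a), r) \<in> E" "u1 = opt2list y0" "w1 = opt2list a"
    using path_step.hyps(1) by (rule monoid_edgesE)
  show ?case
  proof (cases y0)
    case None
    with edge path_step.prems path.path_step[OF A'_edge_eps path_step.hyps(3)]
    show ?thesis by simp
  next
    case (Some g)
    with edge path_step.prems obtain m ms' where ms: "ms = m # ms'" "length ms' = length u2"
      by (cases ms) auto
    have "p \<in> Q" using assms edge(1) by blast
    from path_append[OF path_A'_pad_letter[OF edge(1)[unfolded Some] this] path_step.hyps(3)[OF ms(2)]]
    show ?thesis using edge Some ms by simp
  qed
qed

lemma path_A'_of_padding:
  assumes "\<forall>(p, l, q) \<in> E. p \<in> Q" "path (monoid_edges E) p (y, w) q" "q \<in> Q"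
    and "length ms = length y"
  shows "path (A'_edges Q E) (p, True) (pad_word ms k y, w) (q, False)"
proof -
  have "path (A'_edges Q E) (q, True) (replicate k (Neg Hash), []) (q, False)"
    using path_step[OF A'_edge_switch[OF assms(3)] path_A'_loops[OF assms(3)]] by simp
  from path_append[OF path_A'_of_path_monoid_edges[OF assms(1,2,4)] this]
  show ?thesis by (simp add: pad_word_def)
qed

lemma path_monoid_edges_of_path_A':
  "path (A'_edges Q E) (p, b) (u, w) (q, False) \<Longrightarrow>
   \<exists>y ms k. length ms = length y \<and> u = pad_word ms k y \<and> (\<not> b \<longrightarrow> starts_negative y)
     \<and> path (monoid_edges E) p (y, w) q"
proof (induction "(p, b)" "(u, w)" "(q, False)" arbitrary: p b u w rule: path.induct)
  case path_nil
  then show ?case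
    by (intro exI[of _ "[]"] exI[of _ "[]"] exI[of _ 0]) (auto simp: starts_negative_def path.path_nil)
next
  case (path_step u1 w1 r u2 w2)
  obtain r' c where r: "r = (r', c)" by fastforce
  with path_step.hyps(3) obtain y ms k where IH: "length ms = length y" "u2 = pad_word ms k y"
    "\<not> c \<longrightarrow> starts_negative y" "path (monoid_edges E) r' (y, w2) q"
    by blast
  from path_step.hyps(1) show ?case
  proof (cases rule: A'_edgesE)
    case (Pos p' x a q')
    with r IH path_monoid_edges_step[of p' "Some (Pos x)"] show ?thesis
      by (intro exI[of _ "Pos x # y"] exI[of _ "0 # ms"] exI[of _ k]) auto
  next
    case (Neg p' x a q')
    with r IH path_monoid_edges_step[of p' "Some (Neg x)"] show ?thesis
      by (intro exI[of _ "Neg x # y"] exI[of _ "0 # ms"] exI[of _ k]) (auto simp: starts_negative_def)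
  next
    case (eps p' a q')
    with r IH path_monoid_edges_step[of p' None] show ?thesis
      by (intro exI[of _ y] exI[of _ ms] exI[of _ k]) auto
  next
    case (switch q')
    with r IH show ?thesis by (intro exI[of _ y] exI[of _ ms] exI[of _ k]) auto
  next
    case (loop q')
    with r IH(3) have neg: "starts_negative y" by simp
    then obtain ms' k' where "length ms' = length y" "Neg Hash # u2 = pad_word ms' k' y"
      unfolding IH(2) by (rule Neg_Hash_Cons_pad_word[OF _ IH(1)])
    with loop r IH(4) neg show ?thesis by (intro exI[of _ y] exI[of _ ms'] exI[of _ k']) auto
  qed
qed

theorem lemma4p5:
  fixes X :: "'x set" and \<Sigma> :: "'c set" and Q :: "'q set" and q0 :: 'q and F :: "'q set"
    and E :: "('q \<times> ('x gen option \<times> 'c option) \<times> 'q) set"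
    and x :: "'x hsym gen list" and w :: "'c list"
  assumes "finite X" and "finite \<Sigma>" and "finite Q" and "finite E"
    and "q0 \<in> Q" and "F \<subseteq> Q"
    and "\<forall>(p, (y, a), q) \<in> E. p \<in> Q \<and> q \<in> Q \<and> (\<forall>g. y = Some g \<longrightarrow> base g \<in> X)
                                 \<and> (\<forall>c. a = Some c \<longrightarrow> c \<in> \<Sigma>)"
    and "\<forall>g \<in> set x. base g \<in> Sym ` X \<union> {Hash}"
    and "set w \<subseteq> \<Sigma>"
  shows "accepts (A'_edges Q E) (A'_start q0) (A'_finals F) (x, w) \<longleftrightarrow>
         (\<exists>y. (\<forall>g \<in> set y. base g \<in> X) \<and> permissible_padding x y \<and> accepts (monoid_edges E) q0 F (y, w))"
proof
  assume "accepts (A'_edges Q E) (A'_start q0) (A'_finals F) (x, w)"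
  then obtain q where "q \<in> F" and path_A': "path (A'_edges Q E) (q0, True) (x, w) (q, False)"
    unfolding accepts_def A'_finals_def A'_start_def by blast
  obtain y ms k where "length ms = length y" "x = pad_word ms k y"
    and path_A: "path (monoid_edges E) q0 (y, w) q"
    using path_monoid_edges_of_path_A'[OF path_A'] by blast
  moreover have "\<forall>(p, (y, a), q) \<in> E. \<forall>g. y = Some g \<longrightarrow> base g \<in> X"
    using assms(7) by blast
  then have "\<forall>g \<in> set y. base g \<in> X"
    using path_monoid_edges_letters path_A by fastforce
  ultimately show "\<exists>y. (\<forall>g \<in> set y. base g \<in> X) \<and> permissible_padding x y \<and> accepts (monoid_edges E) q0 F (y, w)"
    using \<open>q \<in> F\<close> unfolding permissible_padding_iff_pad_word accepts_def by blast
next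
  assume "\<exists>y. (\<forall>g \<in> set y. base g \<in> X) \<and> permissible_padding x y \<and> accepts (monoid_edges E) q0 F (y, w)"
  then obtain y ms k q where len: "length ms = length y" and x: "x = pad_word ms k y"
    and "q \<in> F" and path_A: "path (monoid_edges E) q0 (y, w) q"
    unfolding permissible_padding_iff_pad_word accepts_def by blast
  have "\<forall>(p, l, q) \<in> E. p \<in> Q"
    using assms(7) by blast
  moreover from \<open>q \<in> F\<close> have "q \<in> Q"
    using assms(6) by blast
  ultimately have "path (A'_edges Q E) (q0, True) (x, w) (q, False)"
    unfolding x by (rule path_A'_of_padding[OF _ path_A _ len])
  with \<open>q \<in> F\<close> show "accepts (A'_edges Q E) (A'_start q0) (A'_finals F) (x, w)"
    unfolding accepts_def A'_finals_def A'_start_def by blast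
qed

end
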